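(* For every positively oriented $J$-basis $E$ of $\mathbb{R}^{2n,2n-1}$, the closed crooked halfspace $\overline{\mathcal{H}}_E$ is the topological closure of the open crooked halfspace $\mathcal{H}_E$.
   Context: $\mathbb{R}^{2n,2n-1}$ is $\mathbb{R}^{4n-1}$ with form $v^TJw$, $J$ antidiagonal with $J_{i,4n-i}=(-1)^i$; a $J$-basis is one in which the Gram matrix is $J$. For a nonzero vector $v$ with coordinates $(v_1,\dots,v_{4n-1})$ in the basis $E$, the upper sign variation $S^+_E(v)$ is the number of sign changes in the coordinate sequence when a sign is assigned to each zero coordinate so as to maximize this number, and the lower sign variation $S^-_E(v)$ is the number of sign changes when signs of zero coordinates are chosen to minimize it (equivalently, the number of sign changes among nonzero coordinates). The open crooked halfspace is $\mathcal{H}_E=\{v: S^+_E(v)\le 2n-1$, and in case of equality the sign of the last coordinate used in computing $S^+_E$ is positive$\}$; the closed crooked halfspace is $\overline{\mathcal{H}}_E=\{v: S^-_E(v)\le 2n-1$, and in case of equality the last nonzero coordinate is positive$\}$. *)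

theory Defs
  imports "HOL-Analysis.Analysis"
begin

(* R^{2n,2n-1}: vectors of R^{4n-1} are modelled as functions nat => real
   supported on the index set {1..4n-1} (coordinates are 1-based as in the paper).
   The ambient topology is the product topology on nat => real, which on this
   (closed) subspace is the usual Euclidean topology of R^{4n-1}. *)

definition dimN :: "nat \<Rightarrow> nat" where
  "dimN n = 4 * n - 1"

definition Vsp :: "nat \<Rightarrow> (nat \<Rightarrow> real) set" where
  "Vsp n = {v. \<forall>i. i \<notin> {1..dimN n} \<longrightarrow> v i = 0}"

definition Jmat :: "nat \<Rightarrow> nat \<Rightarrow> nat \<Rightarrow> real" where
  "Jmat n i j = (if i + j = 4 * n then (-1) ^ i else 0)"

definition Jform :: "nat \<Rightarrow> (nat \<Rightarrow> real) \<Rightarrow> (nat \<Rightarrow> real) \<Rightarrow> real" where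
  "Jform n v w = (\<Sum>i\<in>{1..dimN n}. \<Sum>j\<in>{1..dimN n}. v i * Jmat n i j * w j)"

definition is_basis :: "nat \<Rightarrow> (nat \<Rightarrow> nat \<Rightarrow> real) \<Rightarrow> bool" where
  "is_basis n E \<longleftrightarrow>
     (\<forall>i\<in>{1..dimN n}. E i \<in> Vsp n)
   \<and> (\<forall>c. (\<forall>k. (\<Sum>i\<in>{1..dimN n}. c i * E i k) = 0) \<longrightarrow> (\<forall>i\<in>{1..dimN n}. c i = 0))
   \<and> (\<forall>v\<in>Vsp n. \<exists>c. v = (\<lambda>k. \<Sum>i\<in>{1..dimN n}. c i * E i k))"

definition J_basis :: "nat \<Rightarrow> (nat \<Rightarrow> nat \<Rightarrow> real) \<Rightarrow> bool" where
  "J_basis n E \<longleftrightarrow> is_basis n E \<and>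
     (\<forall>i\<in>{1..dimN n}. \<forall>j\<in>{1..dimN n}. Jform n (E i) (E j) = Jmat n i j)"

(* positively oriented: the matrix with columns E 1, ..., E (4n-1) (in standard
   coordinates) has positive determinant (Leibniz formula). Entry (i,j) = E j i. *)
definition pos_oriented :: "nat \<Rightarrow> (nat \<Rightarrow> nat \<Rightarrow> real) \<Rightarrow> bool" where
  "pos_oriented n E \<longleftrightarrow>
     (\<Sum>p | p permutes {1..dimN n}. of_int (sign p) * (\<Prod>i\<in>{1..dimN n}. E (p i) i)) > 0"

definition coords :: "nat \<Rightarrow> (nat \<Rightarrow> nat \<Rightarrow> real) \<Rightarrow> (nat \<Rightarrow> real) \<Rightarrow> nat \<Rightarrow> real" where
  "coords n E v = (THE c. (\<forall>i. i \<notin> {1..dimN n} \<longrightarrow> c i = 0) \<and>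
                           v = (\<lambda>k. \<Sum>i\<in>{1..dimN n}. c i * E i k))"

definition sign_assignment :: "nat \<Rightarrow> (nat \<Rightarrow> real) \<Rightarrow> (nat \<Rightarrow> real) \<Rightarrow> bool" where
  "sign_assignment m c s \<longleftrightarrow>
     (\<forall>i\<in>{1..m}. (s i = 1 \<or> s i = -1) \<and> (c i \<noteq> 0 \<longrightarrow> s i = sgn (c i)))"

definition sign_changes :: "nat \<Rightarrow> (nat \<Rightarrow> real) \<Rightarrow> nat" where
  "sign_changes m s = card {i\<in>{1..<m}. s i * s (i + 1) < 0}"

definition upper_var :: "nat \<Rightarrow> (nat \<Rightarrow> real) \<Rightarrow> nat" where
  "upper_var m c = Max {sign_changes m s | s. sign_assignment m c s}"

definition lower_var :: "nat \<Rightarrow> (nat \<Rightarrow> real) \<Rightarrow> nat" where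
  "lower_var m c = Min {sign_changes m s | s. sign_assignment m c s}"

definition open_crooked_halfspace :: "nat \<Rightarrow> (nat \<Rightarrow> nat \<Rightarrow> real) \<Rightarrow> (nat \<Rightarrow> real) set" where
  "open_crooked_halfspace n E =
     {v \<in> Vsp n. let c = coords n E v; m = dimN n in
        upper_var m c \<le> 2 * n - 1 \<and>
        (upper_var m c = 2 * n - 1 \<longrightarrow>
           (\<exists>s. sign_assignment m c s \<and> sign_changes m s = upper_var m c \<and> s m = 1))}"

definition closed_crooked_halfspace :: "nat \<Rightarrow> (nat \<Rightarrow> nat \<Rightarrow> real) \<Rightarrow> (nat \<Rightarrow> real) set" where
  "closed_crooked_halfspace n E =
     {v \<in> Vsp n. let c = coords n E v; m = dimN n in
        lower_var m c \<le> 2 * n - 1 \<and>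
        (lower_var m c = 2 * n - 1 \<longrightarrow>
           (\<exists>i\<in>{1..m}. c i > 0 \<and> (\<forall>j. i < j \<and> j \<le> m \<longrightarrow> c j = 0)))}"

end

theory Submission
  imports Defs
begin

text \<open>Pairing with the form recovers the coordinates of \<open>v\<close> in a \<open>J\<close>-basis continuously,
  so both halfspaces are conditions on the coordinate sequence \<open>c\<close>. If \<open>c\<close> satisfies the
  closed condition, fill its zeros with the signs of an assignment realising the lower
  variation, chosen positive at the end in the boundary case; for every \<open>t > 0\<close> the sequence
  \<open>c + t f\<close> has no zeros and upper variation equal to the lower variation of \<open>c\<close>, so it lies in
  the open halfspace and \<open>c\<close> is its limit. Conversely, the signs of the nonzero coordinates of
  \<open>c\<close> persist in a neighbourhood, and passing to a sequence \<open>d\<close> with the same signs on the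
  support of \<open>c\<close> can only increase the lower variation, while at equality the last nonzero
  coordinates of \<open>c\<close> and \<open>d\<close> have the same sign; hence the closed condition for \<open>d\<close>
  implies it for \<open>c\<close>.\<close>

section \<open>Sign variation of finite sequences\<close>

lemma sign_changes_cong:
  assumes "\<And>i. i \<in> {1..m} \<Longrightarrow> s i = s' i"
  shows "sign_changes m s = sign_changes m s'"
proof -
  have "{i\<in>{1..<m}. s i * s (i + 1) < 0} = {i\<in>{1..<m}. s' i * s' (i + 1) < 0}"
    using assms by auto
  then show ?thesis by (simp add: sign_changes_def)
qed

lemma sign_changes_le: "sign_changes m s \<le> m"
proof -
  have "sign_changes m s \<le> card {1..<m}"
    unfolding sign_changes_def by (rule card_mono) auto
  then show ?thesis by simp
qed

lemma sign_changes_mono: "p \<le> m \<Longrightarrow> sign_changes p s \<le> sign_changes m s"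
  unfolding sign_changes_def by (intro card_mono) auto

lemma sign_changes_less:
  assumes "1 \<le> p" "p \<le> i" "i < m" "s i * s (i + 1) < 0"
  shows "sign_changes p s < sign_changes m s"
proof -
  let ?changes = "\<lambda>m. {j\<in>{1..<m}. s j * s (j + 1) < 0}"
  have "?changes p \<subseteq> ?changes m" "i \<in> ?changes m - ?changes p" using assms by auto
  then have "?changes p \<subset> ?changes m" by blast
  then show ?thesis unfolding sign_changes_def by (simp add: psubset_card_mono)
qed

lemma sign_change_between:
  fixes s :: "nat \<Rightarrow> real"
  assumes pm1: "\<And>i. i \<in> {p..q} \<Longrightarrow> s i = 1 \<or> s i = -1" and "p \<le> q" and "s p \<noteq> s q"
  shows "\<exists>i\<in>{p..<q}. s i * s (i + 1) < 0"
proof (rule ccontr)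
  assume "\<not> ?thesis"
  then have no_change: "s i * s (i + 1) \<ge> 0" if "i \<in> {p..<q}" for i
    using that by (auto simp: not_less)
  have "p + d \<le> q \<longrightarrow> s (p + d) = s p" for d
  proof (induction d)
    case (Suc d)
    show ?case
    proof
      assume le: "p + Suc d \<le> q"
      then have "s (p + d) = s p" using Suc by simp
      moreover have "s (p + d) * s (p + d + 1) \<ge> 0" using no_change le by simp
      moreover have "s (p + d) = 1 \<or> s (p + d) = -1" "s (p + d + 1) = 1 \<or> s (p + d + 1) = -1"
        using pm1 le by auto
      ultimately show "s (p + Suc d) = s p" by auto
    qed
  qed simp
  from this[of "q - p"] assms show False by simp
qed

lemma sign_assignment_pm1: "sign_assignment m c s \<Longrightarrow> i \<in> {1..m} \<Longrightarrow> s i = 1 \<or> s i = -1"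
  by (simp add: sign_assignment_def)

lemma sign_assignment_nonzero:
  "sign_assignment m c s \<Longrightarrow> i \<in> {1..m} \<Longrightarrow> c i \<noteq> 0 \<Longrightarrow> s i = sgn (c i)"
  by (simp add: sign_assignment_def)

lemma sign_assignment_exists: "\<exists>s. sign_assignment m c s"
proof
  show "sign_assignment m c (\<lambda>i. if c i = 0 then 1 else sgn (c i))"
    by (auto simp: sign_assignment_def sgn_if)
qed

lemma finite_sign_change_counts: "finite {sign_changes m s | s. sign_assignment m c s}"
  by (rule finite_subset[of _ "{..m}"]) (auto simp: sign_changes_le)

lemma lower_var_le: "sign_assignment m c s \<Longrightarrow> lower_var m c \<le> sign_changes m s"
  unfolding lower_var_def by (intro Min_le finite_sign_change_counts) auto

lemma upper_var_ge: "sign_assignment m c s \<Longrightarrow> sign_changes m s \<le> upper_var m c"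
  unfolding upper_var_def by (intro Max_ge finite_sign_change_counts) auto

lemma lower_var_attained:
  obtains s where "sign_assignment m c s" "sign_changes m s = lower_var m c"
proof -
  have "lower_var m c \<in> {sign_changes m s | s. sign_assignment m c s}"
    unfolding lower_var_def using sign_assignment_exists[of m c]
    by (intro Min_in finite_sign_change_counts) auto
  then show ?thesis using that by auto
qed

lemma lower_var_le_upper_var: "lower_var m c \<le> upper_var m c"
  by (metis lower_var_attained upper_var_ge)

lemma lower_var_eq_0:
  assumes "\<And>i. i \<in> {1..m} \<Longrightarrow> c i = 0"
  shows "lower_var m c = 0"
proof -
  have "sign_assignment m c (\<lambda>_. 1)" using assms by (simp add: sign_assignment_def)
  moreover have "sign_changes m (\<lambda>_. 1) = 0" by (simp add: sign_changes_def)
  ultimately show ?thesis using lower_var_le by fastforce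
qed

lemma upper_var_nonzero:
  assumes "\<And>i. i \<in> {1..m} \<Longrightarrow> c i \<noteq> 0" and "sign_assignment m c s"
  shows "upper_var m c = sign_changes m s"
proof -
  have "sign_changes m s' = sign_changes m s" if "sign_assignment m c s'" for s'
    using that assms by (intro sign_changes_cong) (simp add: sign_assignment_def)
  then have "{sign_changes m s | s. sign_assignment m c s} = {sign_changes m s}"
    using assms(2) by blast
  then show ?thesis by (simp add: upper_var_def)
qed

definition freeze_after :: "nat \<Rightarrow> (nat \<Rightarrow> real) \<Rightarrow> nat \<Rightarrow> real" where
  "freeze_after p s i = (if i \<le> p then s i else s p)"

definition alternate_after :: "nat \<Rightarrow> (nat \<Rightarrow> real) \<Rightarrow> nat \<Rightarrow> real" where
  "alternate_after p s i = (if i \<le> p then s i else s p * (-1) ^ (i - p))"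

lemma sign_changes_freeze_after:
  assumes "s p = 1 \<or> s p = -1" "p \<le> m"
  shows "sign_changes m (freeze_after p s) = sign_changes p s"
proof -
  have "freeze_after p s i * freeze_after p s (i + 1) = (if i < p then s i * s (i + 1) else 1)" for i
    using assms(1) by (auto simp: freeze_after_def)
  then have "{i\<in>{1..<m}. freeze_after p s i * freeze_after p s (i + 1) < 0}
      = {i\<in>{1..<p}. s i * s (i + 1) < 0}"
    using assms(2) by auto
  then show ?thesis by (simp add: sign_changes_def)
qed

lemma sign_changes_alternate_after:
  assumes "s p = 1 \<or> s p = -1" "1 \<le> p" "p \<le> m"
  shows "sign_changes m (alternate_after p s) = sign_changes p s + (m - p)"
proof -
  have alternating: "alternate_after p s i * alternate_after p s (i + 1) = -1" if "p \<le> i" for i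
  proof -
    have "alternate_after p s i * alternate_after p s (i + 1)
        = (s p * s p) * ((-1) ^ (i - p) * (-1) ^ Suc (i - p))"
      using that by (auto simp: alternate_after_def Suc_diff_le mult_ac)
    also have "\<dots> = -1" using assms(1) by auto
    finally show ?thesis .
  qed
  then have "alternate_after p s i * alternate_after p s (i + 1)
      = (if i < p then s i * s (i + 1) else -1)" for i
    by (auto simp: alternate_after_def not_less)
  then have "{i\<in>{1..<m}. alternate_after p s i * alternate_after p s (i + 1) < 0}
      = {i\<in>{1..<p}. s i * s (i + 1) < 0} \<union> {p..<m}"
    using assms(2,3) by auto
  moreover have "{i\<in>{1..<p}. s i * s (i + 1) < 0} \<inter> {p..<m} = {}" by auto
  ultimately show ?thesis by (simp add: sign_changes_def card_Un_disjoint)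
qed

definition is_last_nonzero :: "nat \<Rightarrow> (nat \<Rightarrow> real) \<Rightarrow> nat \<Rightarrow> bool" where
  "is_last_nonzero m c p \<longleftrightarrow> p \<in> {1..m} \<and> c p \<noteq> 0 \<and> (\<forall>j. p < j \<and> j \<le> m \<longrightarrow> c j = 0)"

lemma last_nonzero_exists:
  assumes "\<exists>i\<in>{1..m}. c i \<noteq> 0"
  obtains p where "is_last_nonzero m c p"
proof -
  let ?F = "{i\<in>{1..m}. c i \<noteq> 0}"
  have fin: "finite ?F" and "?F \<noteq> {}" using assms by auto
  then have max: "Max ?F \<in> ?F" by (rule Max_in)
  have "c j = 0" if "Max ?F < j" "j \<le> m" for j
  proof (rule ccontr)
    assume "c j \<noteq> 0"
    with that max have "j \<in> ?F" by auto
    then have "j \<le> Max ?F" by (rule Max_ge[OF fin])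
    then show False using that(1) by simp
  qed
  then have "is_last_nonzero m c (Max ?F)" using max unfolding is_last_nonzero_def by blast
  then show ?thesis by (rule that)
qed

lemma last_nonzero_if_lower_var_pos:
  assumes "lower_var m c > 0"
  obtains p where "is_last_nonzero m c p"
proof (rule last_nonzero_exists)
  show "\<exists>i\<in>{1..m}. c i \<noteq> 0"
  proof (rule ccontr)
    assume "\<not> ?thesis"
    then have "lower_var m c = 0" by (intro lower_var_eq_0) auto
    then show False using assms by simp
  qed
qed

lemma sign_assignment_freeze_after:
  "sign_assignment m c s \<Longrightarrow> is_last_nonzero m c p \<Longrightarrow> sign_assignment m c (freeze_after p s)"
  by (auto simp: sign_assignment_def is_last_nonzero_def freeze_after_def)

lemma sign_assignment_alternate_after:
  assumes "sign_assignment m c s" "is_last_nonzero m c p"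
  shows "sign_assignment m c (alternate_after p s)"
  unfolding sign_assignment_def
proof (intro ballI conjI impI)
  fix i assume i: "i \<in> {1..m}"
  have p: "p \<in> {1..m}" "s p = 1 \<or> s p = -1"
    using assms sign_assignment_pm1 by (auto simp: is_last_nonzero_def)
  have "s p * (-1) ^ k = 1 \<or> s p * (-1) ^ k = -1" for k
    using p(2) by (cases "even k") auto
  then show "alternate_after p s i = 1 \<or> alternate_after p s i = -1"
    using sign_assignment_pm1[OF assms(1) i] by (simp add: alternate_after_def)
  show "alternate_after p s i = sgn (c i)" if "c i \<noteq> 0"
    using assms i that by (cases "i \<le> p") (auto simp: sign_assignment_def
      alternate_after_def is_last_nonzero_def)
qed

text \<open>Signing the zeros after the last nonzero coordinate \<open>c\<^sub>p\<close> constantly adds no sign change,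
  signing them alternately adds \<open>m - p\<close>.\<close>

lemma lower_var_less_upper_var:
  assumes "is_last_nonzero m c p" "p < m"
  shows "lower_var m c < upper_var m c"
proof -
  obtain s where s: "sign_assignment m c s" using sign_assignment_exists by blast
  have p: "1 \<le> p" "p \<le> m" "s p = 1 \<or> s p = -1"
    using assms sign_assignment_pm1[OF s] by (auto simp: is_last_nonzero_def)
  have "lower_var m c \<le> sign_changes m (freeze_after p s)"
    by (rule lower_var_le[OF sign_assignment_freeze_after[OF s assms(1)]])
  also have "\<dots> = sign_changes p s" using sign_changes_freeze_after p by simp
  also have "\<dots> < sign_changes p s + (m - p)" using assms(2) by simp
  also have "\<dots> = sign_changes m (alternate_after p s)"
    using sign_changes_alternate_after p by simp
  also have "\<dots> \<le> upper_var m c"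
    by (rule upper_var_ge[OF sign_assignment_alternate_after[OF s assms(1)]])
  finally show ?thesis .
qed

lemma lower_var_attained_frozen:
  assumes "is_last_nonzero m c p"
  obtains s where "sign_assignment m c s" "sign_changes m s = lower_var m c" "s m = sgn (c p)"
proof -
  obtain s where s: "sign_assignment m c s" "sign_changes m s = lower_var m c"
    using lower_var_attained by blast
  have p: "p \<le> m" "s p = sgn (c p)" "s p = 1 \<or> s p = -1"
    using assms s(1) by (auto simp: is_last_nonzero_def sign_assignment_def)
  have frozen: "sign_assignment m c (freeze_after p s)"
    by (rule sign_assignment_freeze_after[OF s(1) assms])
  have "sign_changes m (freeze_after p s) = sign_changes p s"
    using sign_changes_freeze_after p by simp
  also have "\<dots> \<le> lower_var m c" using sign_changes_mono[OF p(1), of s] s(2) by simp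
  finally have "sign_changes m (freeze_after p s) = lower_var m c"
    using lower_var_le[OF frozen] by simp
  moreover have "freeze_after p s m = sgn (c p)" using p by (simp add: freeze_after_def)
  ultimately show ?thesis using that frozen by blast
qed

definition sgn_agree_on_support :: "nat \<Rightarrow> (nat \<Rightarrow> real) \<Rightarrow> (nat \<Rightarrow> real) \<Rightarrow> bool" where
  "sgn_agree_on_support m c d \<longleftrightarrow> (\<forall>i\<in>{1..m}. c i \<noteq> 0 \<longrightarrow> sgn (d i) = sgn (c i))"

lemma sign_assignment_if_sgn_agree:
  "sgn_agree_on_support m c d \<Longrightarrow> sign_assignment m d s \<Longrightarrow> sign_assignment m c s"
  by (auto simp: sgn_agree_on_support_def sign_assignment_def sgn_if split: if_splits)

lemma lower_var_mono_if_sgn_agree: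
  assumes "sgn_agree_on_support m c d"
  shows "lower_var m c \<le> lower_var m d"
proof -
  obtain s where "sign_assignment m d s" "sign_changes m s = lower_var m d"
    using lower_var_attained by blast
  then show ?thesis using lower_var_le sign_assignment_if_sgn_agree[OF assms] by metis
qed

text \<open>A sign change of \<open>d\<close> after the last nonzero coordinate of \<open>c\<close> could be removed by
  freezing, which would push the lower variation of \<open>c\<close> below that of \<open>d\<close>.\<close>

lemma last_nonzero_sgn_if_sgn_agree:
  assumes agree: "sgn_agree_on_support m c d"
    and eq: "lower_var m c = lower_var m d"
    and p: "is_last_nonzero m c p" and q: "is_last_nonzero m d q"
  shows "sgn (d q) = sgn (c p)"
proof (rule ccontr)
  assume sgn_ne: "sgn (d q) \<noteq> sgn (c p)"
  have "sgn (d p) = sgn (c p)" using agree p by (simp add: sgn_agree_on_support_def is_last_nonzero_def)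
  then have "d p \<noteq> 0" using p by (auto simp: is_last_nonzero_def sgn_zero_iff)
  then have pq: "p \<le> q" using p q by (meson is_last_nonzero_def not_le atLeastAtMost_iff)
  obtain s where s: "sign_assignment m d s" "sign_changes m s = lower_var m d"
    using lower_var_attained by blast
  have "s p = sgn (d p)" "s q = sgn (d q)"
    using s(1) p q \<open>d p \<noteq> 0\<close> by (auto simp: is_last_nonzero_def sign_assignment_def)
  moreover have "\<And>i. i \<in> {p..q} \<Longrightarrow> s i = 1 \<or> s i = -1"
    using s(1) p q by (auto simp: is_last_nonzero_def sign_assignment_def)
  ultimately obtain i where i: "i \<in> {p..<q}" "s i * s (i + 1) < 0"
    using sign_change_between[OF _ pq] sgn_ne \<open>sgn (d p) = sgn (c p)\<close> by metis
  have s_c: "sign_assignment m c s" by (rule sign_assignment_if_sgn_agree[OF agree s(1)])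
  have p_bounds: "1 \<le> p" "p \<le> m" "s p = 1 \<or> s p = -1"
    using p sign_assignment_pm1[OF s_c] by (auto simp: is_last_nonzero_def)
  have "lower_var m c \<le> sign_changes m (freeze_after p s)"
    by (rule lower_var_le[OF sign_assignment_freeze_after[OF s_c p]])
  also have "\<dots> = sign_changes p s" using sign_changes_freeze_after p_bounds by simp
  also have "\<dots> < sign_changes m s"
    using sign_changes_less[OF p_bounds(1) _ _ i(2)] i(1) q by (auto simp: is_last_nonzero_def)
  finally show False using eq s(2) by simp
qed

definition closed_crooked_cond :: "nat \<Rightarrow> nat \<Rightarrow> (nat \<Rightarrow> real) \<Rightarrow> bool" where
  "closed_crooked_cond m k c \<longleftrightarrow> lower_var m c \<le> k \<and>
     (lower_var m c = k \<longrightarrow> (\<exists>i\<in>{1..m}. c i > 0 \<and> (\<forall>j. i < j \<and> j \<le> m \<longrightarrow> c j = 0)))"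

definition open_crooked_cond :: "nat \<Rightarrow> nat \<Rightarrow> (nat \<Rightarrow> real) \<Rightarrow> bool" where
  "open_crooked_cond m k c \<longleftrightarrow> upper_var m c \<le> k \<and>
     (upper_var m c = k \<longrightarrow>
        (\<exists>s. sign_assignment m c s \<and> sign_changes m s = upper_var m c \<and> s m = 1))"

lemma closed_crooked_cond_iff:
  "closed_crooked_cond m k c \<longleftrightarrow> lower_var m c \<le> k \<and>
     (lower_var m c = k \<longrightarrow> (\<exists>p. is_last_nonzero m c p \<and> c p > 0))"
  unfolding closed_crooked_cond_def is_last_nonzero_def by force

lemma open_crooked_cond_imp_closed:
  assumes "1 \<le> k" "open_crooked_cond m k c"
  shows "closed_crooked_cond m k c"
  unfolding closed_crooked_cond_iff
proof (intro conjI impI)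
  have up: "upper_var m c \<le> k" using assms(2) by (simp add: open_crooked_cond_def)
  then show "lower_var m c \<le> k" using lower_var_le_upper_var le_trans by blast
  assume low: "lower_var m c = k"
  then have "lower_var m c > 0" using assms(1) by simp
  then obtain p where p: "is_last_nonzero m c p" by (rule last_nonzero_if_lower_var_pos)
  have "upper_var m c = k" using lower_var_le_upper_var[of m c] up low by simp
  then have "p = m" using lower_var_less_upper_var[OF p] low p
    by (force simp: is_last_nonzero_def)
  obtain s where "sign_assignment m c s" "s m = 1"
    using assms(2) \<open>upper_var m c = k\<close> by (auto simp: open_crooked_cond_def)
  then have "sgn (c p) = 1" using p \<open>p = m\<close> by (auto simp: is_last_nonzero_def sign_assignment_def)
  then show "\<exists>p. is_last_nonzero m c p \<and> c p > 0" using p by (auto simp: sgn_1_pos)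
qed

definition fill_zeros :: "nat \<Rightarrow> (nat \<Rightarrow> real) \<Rightarrow> (nat \<Rightarrow> real) \<Rightarrow> nat \<Rightarrow> real" where
  "fill_zeros m c s j = (if j \<in> {1..m} \<and> c j = 0 then s j else 0)"

lemma fill_zeros_nonzero:
  assumes "sign_assignment m c s" "t > 0" "j \<in> {1..m}"
  shows "c j + t * fill_zeros m c s j \<noteq> 0 \<and> sgn (c j + t * fill_zeros m c s j) = s j"
proof (cases "c j = 0")
  case True
  then show ?thesis using sign_assignment_pm1[OF assms(1,3)] assms(2,3)
    by (auto simp: fill_zeros_def sgn_mult)
next
  case False
  then show ?thesis using sign_assignment_nonzero[OF assms(1,3)] by (simp add: fill_zeros_def)
qed

lemma upper_var_fill_zeros:
  assumes "sign_assignment m c s" "t > 0"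
  shows "sign_assignment m (\<lambda>j. c j + t * fill_zeros m c s j) s"
    and "upper_var m (\<lambda>j. c j + t * fill_zeros m c s j) = sign_changes m s"
proof -
  note filled = fill_zeros_nonzero[OF assms]
  show assigned: "sign_assignment m (\<lambda>j. c j + t * fill_zeros m c s j) s"
    using filled sign_assignment_pm1[OF assms(1)] by (simp add: sign_assignment_def)
  show "upper_var m (\<lambda>j. c j + t * fill_zeros m c s j) = sign_changes m s"
    using upper_var_nonzero[OF _ assigned] filled by blast
qed

lemma closed_crooked_cond_perturb:
  assumes "closed_crooked_cond m k c"
  obtains f where "\<And>j. j \<notin> {1..m} \<Longrightarrow> f j = 0"
    and "\<And>t. t > 0 \<Longrightarrow> open_crooked_cond m k (\<lambda>j. c j + t * f j)"
proof -
  obtain s where s: "sign_assignment m c s" "sign_changes m s = lower_var m c"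
    and s_last: "lower_var m c = k \<Longrightarrow> s m = 1"
  proof (cases "lower_var m c = k")
    case True
    then obtain p where "is_last_nonzero m c p" "c p > 0"
      using assms unfolding closed_crooked_cond_iff by blast
    then show ?thesis using that lower_var_attained_frozen by (metis sgn_pos)
  next
    case False
    then show ?thesis using that lower_var_attained by metis
  qed
  show ?thesis
  proof (rule that[of "fill_zeros m c s"])
    show "fill_zeros m c s j = 0" if "j \<notin> {1..m}" for j
      using that by (auto simp: fill_zeros_def)
    have "lower_var m c \<le> k" using assms by (simp add: closed_crooked_cond_def)
    then show "open_crooked_cond m k (\<lambda>j. c j + t * fill_zeros m c s j)" if "t > 0" for t
      using upper_var_fill_zeros[OF s(1) that] s s_last by (auto simp: open_crooked_cond_def)
  qed
qed

lemma closed_crooked_cond_if_sgn_agree: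
  assumes "1 \<le> k" "sgn_agree_on_support m c d" "closed_crooked_cond m k d"
  shows "closed_crooked_cond m k c"
  unfolding closed_crooked_cond_iff
proof (intro conjI impI)
  have le: "lower_var m c \<le> lower_var m d" by (rule lower_var_mono_if_sgn_agree[OF assms(2)])
  then show "lower_var m c \<le> k" using assms(3) by (simp add: closed_crooked_cond_def)
  assume low: "lower_var m c = k"
  then have eq: "lower_var m d = lower_var m c"
    using le assms(3) by (simp add: closed_crooked_cond_def)
  then have "lower_var m d = k" using low by simp
  then obtain q where q: "is_last_nonzero m d q" "d q > 0"
    using assms(3) unfolding closed_crooked_cond_iff by blast
  have "lower_var m c > 0" using low assms(1) by simp
  then obtain p where p: "is_last_nonzero m c p" by (rule last_nonzero_if_lower_var_pos)
  have "sgn (c p) = sgn (d q)"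
    using last_nonzero_sgn_if_sgn_agree[OF assms(2) eq[symmetric] p q(1)] by simp
  then have "c p > 0" using q(2) by (simp add: sgn_1_pos)
  then show "\<exists>p. is_last_nonzero m c p \<and> c p > 0" using p by blast
qed

section \<open>Coordinates in a \<open>J\<close>-basis\<close>

definition lincomb :: "nat \<Rightarrow> (nat \<Rightarrow> nat \<Rightarrow> real) \<Rightarrow> (nat \<Rightarrow> real) \<Rightarrow> nat \<Rightarrow> real" where
  "lincomb n E g = (\<lambda>k. \<Sum>i\<in>{1..dimN n}. g i * E i k)"

text \<open>Since the Gram matrix is \<open>J\<close>, the basis vector \<open>E\<^sub>j\<close> pairs nontrivially only with
  \<open>E\<^sub>4\<^sub>n\<^sub>-\<^sub>j\<close>, so the \<open>j\<close>-th coordinate is read off by pairing with \<open>E\<^sub>4\<^sub>n\<^sub>-\<^sub>j\<close>.\<close>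

definition dual_coords :: "nat \<Rightarrow> (nat \<Rightarrow> nat \<Rightarrow> real) \<Rightarrow> (nat \<Rightarrow> real) \<Rightarrow> nat \<Rightarrow> real" where
  "dual_coords n E v j = (if j \<in> {1..dimN n} then (-1) ^ j * Jform n (E (4 * n - j)) v else 0)"

lemma Jform_lincomb:
  "Jform n u (lincomb n E g) = (\<Sum>j\<in>{1..dimN n}. g j * Jform n u (E j))"
proof -
  let ?I = "{1..dimN n}"
  have "Jform n u (lincomb n E g)
      = (\<Sum>i\<in>?I. \<Sum>k\<in>?I. \<Sum>j\<in>?I. u i * Jmat n i k * (g j * E j k))"
    by (simp add: Jform_def lincomb_def sum_distrib_left)
  also have "\<dots> = (\<Sum>i\<in>?I. \<Sum>j\<in>?I. \<Sum>k\<in>?I. u i * Jmat n i k * (g j * E j k))"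
    by (rule sum.cong[OF refl], rule sum.swap)
  also have "\<dots> = (\<Sum>j\<in>?I. \<Sum>i\<in>?I. \<Sum>k\<in>?I. u i * Jmat n i k * (g j * E j k))"
    by (rule sum.swap)
  also have "\<dots> = (\<Sum>j\<in>?I. g j * Jform n u (E j))"
    by (simp add: Jform_def sum_distrib_left mult_ac)
  finally show ?thesis .
qed

lemma sum_mult_Jmat:
  assumes "i \<in> {1..dimN n}"
  shows "(\<Sum>j\<in>{1..dimN n}. g j * Jmat n i j) = g (4 * n - i) * (-1) ^ i"
proof -
  have "(\<Sum>j\<in>{1..dimN n}. g j * Jmat n i j)
      = (\<Sum>j\<in>{1..dimN n}. if j = 4 * n - i then g j * (-1) ^ i else 0)"
    using assms by (intro sum.cong) (auto simp: Jmat_def dimN_def)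
  also have "\<dots> = g (4 * n - i) * (-1) ^ i"
    using assms by (auto simp: dimN_def)
  finally show ?thesis .
qed

lemma dual_coords_lincomb:
  assumes "J_basis n E" and supp: "\<And>i. i \<notin> {1..dimN n} \<Longrightarrow> g i = 0"
  shows "dual_coords n E (lincomb n E g) = g"
proof
  fix j
  show "dual_coords n E (lincomb n E g) j = g j"
  proof (cases "j \<in> {1..dimN n}")
    case False
    then show ?thesis unfolding dual_coords_def using supp[OF False] by auto
  next
    case True
    let ?i = "4 * n - j"
    have i: "?i \<in> {1..dimN n}" "4 * n - ?i = j" "j + ?i = 2 * (2 * n)"
      using True by (auto simp: dimN_def)
    have "dual_coords n E (lincomb n E g) j = (-1) ^ j * (\<Sum>l\<in>{1..dimN n}. g l * Jmat n ?i l)"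
      using True assms(1) i(1) by (auto simp: dual_coords_def Jform_lincomb J_basis_def
        intro!: sum.cong)
    also have "\<dots> = g j * ((-1) ^ j * (-1) ^ ?i)"
      using sum_mult_Jmat[OF i(1), of g] i(2) by (simp add: mult_ac)
    also have "(-1::real) ^ j * (-1) ^ ?i = 1"
      by (simp only: power_add[symmetric] i(3) power_mult) simp
    finally show ?thesis by simp
  qed
qed

lemma lincomb_in_Vsp: "J_basis n E \<Longrightarrow> lincomb n E g \<in> Vsp n"
  by (auto simp: lincomb_def Vsp_def J_basis_def is_basis_def intro!: sum.neutral)

lemma coords_lincomb:
  assumes "J_basis n E" and supp: "\<And>i. i \<notin> {1..dimN n} \<Longrightarrow> g i = 0"
  shows "coords n E (lincomb n E g) = g"
  unfolding coords_def
proof (rule the_equality)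
  show "(\<forall>i. i \<notin> {1..dimN n} \<longrightarrow> g i = 0) \<and> lincomb n E g = (\<lambda>k. \<Sum>i\<in>{1..dimN n}. g i * E i k)"
    using supp by (simp add: lincomb_def)
next
  fix c
  assume "(\<forall>i. i \<notin> {1..dimN n} \<longrightarrow> c i = 0) \<and> lincomb n E g = (\<lambda>k. \<Sum>i\<in>{1..dimN n}. c i * E i k)"
  then have "lincomb n E g = lincomb n E c" "\<And>i. i \<notin> {1..dimN n} \<Longrightarrow> c i = 0"
    by (simp_all add: lincomb_def)
  then show "c = g" using dual_coords_lincomb[OF assms(1)] supp by metis
qed

lemma Vsp_obtain_lincomb:
  assumes "J_basis n E" "v \<in> Vsp n"
  obtains g where "\<And>i. i \<notin> {1..dimN n} \<Longrightarrow> g i = 0" "v = lincomb n E g"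
proof -
  obtain c where c: "v = (\<lambda>k. \<Sum>i\<in>{1..dimN n}. c i * E i k)"
    using assms by (auto simp: J_basis_def is_basis_def)
  define g where "g i = (if i \<in> {1..dimN n} then c i else 0)" for i
  have "g i = 0" if "i \<notin> {1..dimN n}" for i
    using that by (auto simp: g_def)
  moreover have "v = lincomb n E g" unfolding c lincomb_def g_def by (intro ext sum.cong) auto
  ultimately show ?thesis by (rule that)
qed

lemma coords_in_Vsp:
  assumes "J_basis n E" "v \<in> Vsp n"
  shows "v = lincomb n E (coords n E v)"
    and "\<And>i. i \<notin> {1..dimN n} \<Longrightarrow> coords n E v i = 0"
    and "coords n E v = dual_coords n E v"
  using Vsp_obtain_lincomb[OF assms] coords_lincomb[OF assms(1)] dual_coords_lincomb[OF assms(1)]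
  by metis+

lemma continuous_on_dual_coords: "continuous_on UNIV (\<lambda>v. dual_coords n E v j)"
proof (cases "j \<in> {1..dimN n}")
  case True
  show ?thesis unfolding dual_coords_def if_P[OF True] Jform_def
    by (intro continuous_intros continuous_on_product_coordinates)
next
  case False
  show ?thesis unfolding dual_coords_def if_not_P[OF False] by simp
qed

lemma closed_Vsp: "closed (Vsp n)"
proof -
  have "Vsp n = (\<Inter>i\<in>-{1..dimN n}. {v. v i = 0})" by (auto simp: Vsp_def)
  moreover have "closed {v::nat \<Rightarrow> real. v i = 0}" for i
    by (intro closed_Collect_eq continuous_on_product_coordinates continuous_intros)
  ultimately show ?thesis by auto
qed

section \<open>Crooked halfspaces\<close>

lemma continuous_path_start_in_closure:
  fixes \<phi> :: "real \<Rightarrow> 'a::topological_space"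
  assumes "continuous_on UNIV \<phi>" "\<And>t. t > 0 \<Longrightarrow> \<phi> t \<in> S"
  shows "\<phi> 0 \<in> closure S"
proof (rule Lim_in_closed_set)
  show "eventually (\<lambda>t. \<phi> t \<in> closure S) (at_right 0)"
    using eventually_at_right_less[of "0::real"]
  proof eventually_elim
    case (elim t)
    then show ?case using assms(2) closure_subset by blast
  qed
  show "(\<phi> \<longlongrightarrow> \<phi> 0) (at_right 0)"
    using assms(1) by (auto simp: continuous_on_def intro: tendsto_within_subset)
qed simp_all

lemma eventually_sgn_agree_on_support:
  fixes f :: "'a::topological_space \<Rightarrow> nat \<Rightarrow> real"
  assumes "\<And>j. continuous_on UNIV (\<lambda>x. f x j)"
  shows "eventually (\<lambda>y. sgn_agree_on_support m (f x) (f y)) (nhds x)"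
proof -
  have "eventually (\<lambda>y. f x j \<noteq> 0 \<longrightarrow> sgn (f y j) = sgn (f x j)) (nhds x)" for j
  proof (cases "f x j = 0")
    case False
    have "open {y. 0 < sgn (f x j) * f y j}"
      by (intro open_Collect_less continuous_intros assms)
    moreover have "0 < sgn (f x j) * f x j" using False by (simp add: sgn_mult_self_eq sgn_if)
    ultimately have "eventually (\<lambda>y. 0 < sgn (f x j) * f y j) (nhds x)"
      using eventually_nhds_in_open[of "{y. 0 < sgn (f x j) * f y j}"] by simp
    then show ?thesis by eventually_elim (auto simp: sgn_if zero_less_mult_iff split: if_splits)
  qed simp
  then show ?thesis
    unfolding sgn_agree_on_support_def by (intro eventually_ball_finite) auto
qed

lemma closed_crooked_halfspace_eq:
  "closed_crooked_halfspace n E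
     = {v \<in> Vsp n. closed_crooked_cond (dimN n) (2 * n - 1) (coords n E v)}"
  by (simp add: closed_crooked_halfspace_def closed_crooked_cond_def Let_def)

lemma open_crooked_halfspace_eq:
  "open_crooked_halfspace n E
     = {v \<in> Vsp n. open_crooked_cond (dimN n) (2 * n - 1) (coords n E v)}"
  by (simp add: open_crooked_halfspace_def open_crooked_cond_def Let_def)

lemma closed_crooked_halfspace_subset_closure:
  assumes "J_basis n E"
  shows "closed_crooked_halfspace n E \<subseteq> closure (open_crooked_halfspace n E)"
proof
  fix v assume v: "v \<in> closed_crooked_halfspace n E"
  let ?c = "coords n E v"
  have "v \<in> Vsp n" and closed: "closed_crooked_cond (dimN n) (2 * n - 1) ?c"
    using v by (simp_all add: closed_crooked_halfspace_eq)
  note c = coords_in_Vsp[OF assms \<open>v \<in> Vsp n\<close>]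
  obtain f where f_supp: "\<And>j. j \<notin> {1..dimN n} \<Longrightarrow> f j = 0"
    and f_open: "\<And>t. t > 0 \<Longrightarrow> open_crooked_cond (dimN n) (2 * n - 1) (\<lambda>j. ?c j + t * f j)"
    using closed_crooked_cond_perturb[OF closed] by blast
  define \<phi> where "\<phi> t = lincomb n E (\<lambda>j. ?c j + t * f j)" for t
  have "\<phi> t \<in> open_crooked_halfspace n E" if "t > 0" for t
    using coords_lincomb[OF assms] lincomb_in_Vsp[OF assms] c(2) f_supp f_open[OF that]
    by (simp add: \<phi>_def open_crooked_halfspace_eq)
  moreover have "continuous_on UNIV \<phi>"
    unfolding \<phi>_def lincomb_def
    by (intro continuous_on_coordinatewise_then_product continuous_intros)
  moreover have "\<phi> 0 = v" using c(1) by (simp add: \<phi>_def)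
  ultimately show "v \<in> closure (open_crooked_halfspace n E)"
    using continuous_path_start_in_closure by metis
qed

lemma closure_open_crooked_halfspace_subset:
  assumes "J_basis n E" "1 \<le> n"
  shows "closure (open_crooked_halfspace n E) \<subseteq> closed_crooked_halfspace n E"
proof
  fix v assume v: "v \<in> closure (open_crooked_halfspace n E)"
  have "closure (open_crooked_halfspace n E) \<subseteq> Vsp n"
    by (rule closure_minimal) (auto simp: closed_Vsp open_crooked_halfspace_eq)
  then have "v \<in> Vsp n" using v by blast
  have "eventually (\<lambda>w. sgn_agree_on_support (dimN n) (dual_coords n E v) (dual_coords n E w))
      (nhds v)"
    by (rule eventually_sgn_agree_on_support[OF continuous_on_dual_coords])
  then obtain w where w: "w \<in> open_crooked_halfspace n E"
    and agree: "sgn_agree_on_support (dimN n) (dual_coords n E v) (dual_coords n E w)"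
    using v unfolding eventually_nhds closure_iff_nhds_not_empty by blast
  have "1 \<le> 2 * n - 1" using assms(2) by simp
  moreover have "w \<in> Vsp n" "open_crooked_cond (dimN n) (2 * n - 1) (coords n E w)"
    using w by (auto simp: open_crooked_halfspace_eq)
  ultimately show "v \<in> closed_crooked_halfspace n E"
    using agree coords_in_Vsp(3)[OF assms(1)] \<open>v \<in> Vsp n\<close>
      closed_crooked_cond_if_sgn_agree open_crooked_cond_imp_closed
    by (simp add: closed_crooked_halfspace_eq)
qed

theorem lemma5p2:
  fixes n :: nat and E :: "nat \<Rightarrow> nat \<Rightarrow> real"
  assumes "n \<ge> 1"
    and "J_basis n E"
    and "pos_oriented n E"
  shows "closed_crooked_halfspace n E = closure (open_crooked_halfspace n E)"
  using closed_crooked_halfspace_subset_closure[OF assms(2)]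
    closure_open_crooked_halfspace_subset[OF assms(2,1)]
  by (rule subset_antisym)

end
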